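(* Let $K$ be a field and $K\langle x,y\rangle$ the free unitary associative algebra of rank $2$ over $K$. Let $V=\mathrm{span}([x,y]^k\mid k\ge 0)$ where $[x,y]=xy-yx$. Let $u(x,y)\in K\langle x,y\rangle\setminus V$ be written as $u=\sum\gamma_{ab}u_{ab}$, $\gamma_{ab}\in K$, in the basis of elements $$u_{ab}=x^{a_1}y^{b_1}[x,y]x^{a_2}y^{b_2}\cdots x^{a_r}y^{b_r}[x,y]x^{a_{r+1}}y^{b_{r+1}},\quad a_i,b_i,r\ge0,$$ and let $\rho=(\alpha x+p(y),\beta y+\gamma)$, with $\alpha,\beta\in K\setminus\{0\}$, $\gamma\in K$, $p(y)\in K[y]$ of degree at least $2$, be a nonaffine triangular automorphism. If $a_1=\cdots=a_{r+1}=0$ for all summands $u_{ab}$ with nonzero coefficient $\gamma_{ab}$, then $\deg u=\deg(\rho u)$. If some $a_i\neq0$ in some summand $u_{ab}$ with $\gamma_{ab}\neq0$, and $\deg p(y)=k>\deg u$, then $\deg(\overline{\rho u})\ge k$.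
   Context: The elements $u_{ab}$ above form a vector space basis of $K\langle x,y\rangle$. The automorphism $\rho=(f,g)$ means $\rho x=f$, $\rho y=g$, and $\rho u=u(f,g)$. $\deg$ denotes total degree. Since $V$ is a graded subspace, the quotient $\overline{K\langle x,y\rangle}=K\langle x,y\rangle/V$ inherits the grading; for $w\notin V$, $\overline{w}$ denotes its image and $\deg\overline{w}$ is the largest $s$ such that the degree-$s$ homogeneous component of $w$ does not lie in $V$. *)

theory Defs
  imports "HOL-Computational_Algebra.Polynomial"
begin

text \<open>Free associative unital algebra K<x,y>: elements are coefficient functions on
words over {x,y} (False = x, True = y) with finite support.\<close>

type_synonym 'k ncp = "bool list \<Rightarrow> 'k"

definition ncsupp :: "'k::zero ncp \<Rightarrow> bool list set" where
  "ncsupp u = {w. u w \<noteq> 0}"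

definition ncone :: "'k::{zero,one} ncp" where
  "ncone = (\<lambda>w. if w = [] then 1 else 0)"

definition ncx :: "'k::{zero,one} ncp" where
  "ncx = (\<lambda>w. if w = [False] then 1 else 0)"

definition ncy :: "'k::{zero,one} ncp" where
  "ncy = (\<lambda>w. if w = [True] then 1 else 0)"

definition ncadd :: "'k::plus ncp \<Rightarrow> 'k ncp \<Rightarrow> 'k ncp" where
  "ncadd p q = (\<lambda>w. p w + q w)"

definition ncsub :: "'k::minus ncp \<Rightarrow> 'k ncp \<Rightarrow> 'k ncp" where
  "ncsub p q = (\<lambda>w. p w - q w)"

definition ncsmul :: "'k::times \<Rightarrow> 'k ncp \<Rightarrow> 'k ncp" where
  "ncsmul a p = (\<lambda>w. a * p w)"

definition ncmul :: "'k::comm_semiring_0 ncp \<Rightarrow> 'k ncp \<Rightarrow> 'k ncp" where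
  "ncmul p q = (\<lambda>w. \<Sum>i\<le>length w. p (take i w) * q (drop i w))"

definition ncpow :: "'k::comm_semiring_1 ncp \<Rightarrow> nat \<Rightarrow> 'k ncp" where
  "ncpow p n = ((ncmul p) ^^ n) ncone"

definition nccomm :: "'k::comm_ring_1 ncp" where
  "nccomm = ncsub (ncmul ncx ncy) (ncmul ncy ncx)"

definition ncV :: "'k::comm_ring_1 ncp set" where
  "ncV = {v. \<exists>N a. v = (\<lambda>w. \<Sum>k<N. a k * ncpow nccomm k w)}"

definition ncdeg :: "'k::zero ncp \<Rightarrow> nat" where
  "ncdeg u = Max (length ` ncsupp u)"

definition nchomog :: "nat \<Rightarrow> 'k::zero ncp \<Rightarrow> 'k ncp" where
  "nchomog s u = (\<lambda>w. if length w = s then u w else 0)"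

text \<open>Degree of the image in K<x,y>/V.\<close>
definition degbar :: "'k::comm_ring_1 ncp \<Rightarrow> nat" where
  "degbar u = Max {s. nchomog s u \<notin> ncV}"

fun wev :: "'k::comm_semiring_1 ncp \<Rightarrow> 'k ncp \<Rightarrow> bool list \<Rightarrow> 'k ncp" where
  "wev f g [] = ncone"
| "wev f g (b # w) = ncmul (if b then g else f) (wev f g w)"

definition ncsubst :: "'k::comm_semiring_1 ncp \<Rightarrow> 'k ncp \<Rightarrow> 'k ncp \<Rightarrow> 'k ncp" where
  "ncsubst u f g = (\<lambda>w'. \<Sum>v\<in>ncsupp u. u v * wev f g v w')"

definition poly_in_y :: "'k::comm_semiring_1 poly \<Rightarrow> 'k ncp" where
  "poly_in_y p = (\<lambda>w. if w = replicate (length w) True then coeff p (length w) else 0)"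

definition tri_aut :: "'k::comm_ring_1 \<Rightarrow> 'k poly \<Rightarrow> 'k \<Rightarrow> 'k \<Rightarrow> 'k ncp \<Rightarrow> 'k ncp" where
  "tri_aut \<alpha> p \<beta> \<gamma> u =
     ncsubst u (ncadd (ncsmul \<alpha> ncx) (poly_in_y p)) (ncadd (ncsmul \<beta> ncy) (ncsmul \<gamma> ncone))"

text \<open>Basis elements u_ab, indexed by the list [(a_1,b_1),...,(a_{r+1},b_{r+1})]:
  x^{a_1} y^{b_1} [x,y] x^{a_2} y^{b_2} ... [x,y] x^{a_{r+1}} y^{b_{r+1}}.\<close>
fun ubasis :: "(nat \<times> nat) list \<Rightarrow> 'k::comm_ring_1 ncp" where
  "ubasis [] = ncone"
| "ubasis [(a, b)] = ncmul (ncpow ncx a) (ncpow ncy b)"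
| "ubasis ((a, b) # r) =
     ncmul (ncmul (ncmul (ncpow ncx a) (ncpow ncy b)) nccomm) (ubasis r)"

end

theory Submission
  imports Defs
begin

text \<open>Words are ordered by length and then lexicographically with \<open>x < y\<close>; this order is
  compatible with concatenation, so leading words are multiplicative. Under \<open>\<rho>\<close>, \<open>x\<close> goes to
  \<open>\<alpha>x + p(y)\<close> with leading word \<open>y\<^sup>k\<close>, \<open>y\<close> to \<open>\<beta>y + \<gamma>\<close> with leading word \<open>y\<close>, and \<open>[x, y]\<close>
  to \<open>\<alpha>\<beta>[x, y]\<close> with leading word \<open>yx\<close>. Hence the leading word of \<open>\<rho> u_ab\<close> is that of
  \<open>u_ab\<close> with each \<open>x\<close> replaced by \<open>y\<^sup>k\<close>. These words stay distinct for distinct \<open>ab\<close>: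
  always if no \<open>x\<close> occurs, and when \<open>k > deg u\<close> because then every \<open>b_i < k\<close>. So the
  leading word of \<open>\<rho> u\<close> is the greatest of them. Without \<open>x\<close> it equals the leading word of
  \<open>u\<close>, which gives \<open>deg u = deg \<rho>u\<close>. Otherwise it has length at least \<open>k\<close> and more
  letters \<open>y\<close> than \<open>x\<close>, whereas every word occurring in \<open>V\<close> is balanced; so the
  homogeneous component of \<open>\<rho> u\<close> of that degree is not in \<open>V\<close>.\<close>

section \<open>Monomials, multiplication and substitution\<close>

definition ncmonom :: "bool list \<Rightarrow> 'k::{zero,one} ncp" where
  "ncmonom v = (\<lambda>w. if w = v then 1 else 0)"

lemma ncsupp_ncmonom [simp]: "ncsupp (ncmonom v :: 'k::zero_neq_one ncp) = {v}"
  by (auto simp: ncsupp_def ncmonom_def)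

lemma ncone_eq_ncmonom: "ncone = ncmonom []"
  by (simp add: ncone_def ncmonom_def)

lemma ncx_eq_ncmonom: "ncx = ncmonom [False]"
  by (simp add: ncx_def ncmonom_def)

lemma ncy_eq_ncmonom: "ncy = ncmonom [True]"
  by (simp add: ncy_def ncmonom_def)

lemma nc_expansion:
  fixes f :: "'k::comm_semiring_1 ncp"
  assumes "finite A" "ncsupp f \<subseteq> A"
  shows "f = (\<lambda>w. \<Sum>v\<in>A. f v * ncmonom v w)"
proof
  fix w
  have "(\<Sum>v\<in>A. f v * ncmonom v w) = (\<Sum>v\<in>A. if v = w then f v else 0)"
    by (intro sum.cong) (auto simp: ncmonom_def)
  also have "\<dots> = f w"
    using assms by (auto simp: ncsupp_def)
  finally show "f w = (\<Sum>v\<in>A. f v * ncmonom v w)" by simp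
qed

lemma ncmul_ncmonom: "ncmul (ncmonom v1 :: 'k::comm_semiring_1 ncp) (ncmonom v2) = ncmonom (v1 @ v2)"
proof
  fix w :: "bool list"
  have "ncmonom v1 (take i w) * ncmonom v2 (drop i w) = (if i = length v1 \<and> w = v1 @ v2 then 1 else (0::'k))"
    if "i \<le> length w" for i
    using that by (auto simp: ncmonom_def)
  then show "ncmul (ncmonom v1) (ncmonom v2) w = (ncmonom (v1 @ v2) w :: 'k)"
    by (simp add: ncmul_def ncmonom_def)
qed

lemma ncmul_one_left [simp]: "ncmul ncone (p :: 'k::comm_semiring_1 ncp) = p"
proof
  fix w
  have "ncmul ncone p w = (\<Sum>i\<le>length w. if i = 0 then p w else 0)"
    unfolding ncmul_def ncone_def by (intro sum.cong) auto
  then show "ncmul ncone p w = p w" by simp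
qed

lemma ncmul_one_right [simp]: "ncmul (p :: 'k::comm_semiring_1 ncp) ncone = p"
proof
  fix w
  have "ncmul p ncone w = (\<Sum>i\<le>length w. if i = length w then p w else 0)"
    unfolding ncmul_def ncone_def by (intro sum.cong) auto
  then show "ncmul p ncone w = p w" by simp
qed

lemma ncmul_assoc: "ncmul (ncmul p q) r = ncmul p (ncmul q (r :: 'k::comm_semiring_1 ncp))"
proof
  fix w :: "bool list"
  define n where "n = length w"
  define G where "G j i = p (take j w) * q (drop j (take i w)) * r (drop i w)" for j i
  have "ncmul (ncmul p q) r w = (\<Sum>i\<le>n. \<Sum>j\<in>{j. j \<in> {..n} \<and> j \<le> i}. G j i)"
    unfolding ncmul_def G_def n_def
    by (intro sum.cong refl) (auto simp: sum_distrib_right min_def intro: sum.cong)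
  also have "\<dots> = (\<Sum>j\<le>n. \<Sum>i\<in>{i. i \<in> {..n} \<and> j \<le> i}. G j i)"
    by (rule sum.swap_restrict) auto
  also have "\<dots> = (\<Sum>j\<le>n. \<Sum>m\<le>n - j. G j (j + m))"
  proof (rule sum.cong [OF refl])
    fix j assume "j \<in> {..n}"
    then show "(\<Sum>i\<in>{i. i \<in> {..n} \<and> j \<le> i}. G j i) = (\<Sum>m\<le>n - j. G j (j + m))"
      using sum.atLeastAtMost_shift_0 [of j n "G j"] by (simp add: atLeast0AtMost atLeastAtMost_def
          atLeast_def atMost_def Collect_conj_eq Int_commute comp_def)
  qed
  also have "\<dots> = ncmul p (ncmul q r) w"
    unfolding ncmul_def G_def n_def
    by (intro sum.cong refl) (simp add: sum_distrib_left mult.assoc drop_take add.commute)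
  finally show "ncmul (ncmul p q) r w = ncmul p (ncmul q r) w" .
qed

lemma ncmul_lincomb_left:
  "ncmul (\<lambda>w. \<Sum>i\<in>I. c i * f i w) (g :: 'k::comm_semiring_1 ncp) = (\<lambda>w. \<Sum>i\<in>I. c i * ncmul (f i) g w)"
  by (rule ext) (simp add: ncmul_def sum_distrib_left sum_distrib_right mult.assoc sum.swap [of _ I])

lemma ncmul_lincomb_right:
  "ncmul (g :: 'k::comm_semiring_1 ncp) (\<lambda>w. \<Sum>i\<in>I. c i * f i w) = (\<lambda>w. \<Sum>i\<in>I. c i * ncmul g (f i) w)"
  by (rule ext) (simp add: ncmul_def sum_distrib_left mult.left_commute sum.swap [of _ I])

lemma ncmul_add_left: "ncmul (ncadd f g) (h :: 'k::comm_semiring_1 ncp) = ncadd (ncmul f h) (ncmul g h)"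
  by (rule ext) (simp add: ncmul_def ncadd_def distrib_right sum.distrib)

lemma ncmul_add_right: "ncmul (h :: 'k::comm_semiring_1 ncp) (ncadd f g) = ncadd (ncmul h f) (ncmul h g)"
  by (rule ext) (simp add: ncmul_def ncadd_def distrib_left sum.distrib)

lemma ncmul_smul_left: "ncmul (ncsmul a f) (g :: 'k::comm_semiring_1 ncp) = ncsmul a (ncmul f g)"
  by (rule ext) (simp add: ncmul_def ncsmul_def sum_distrib_left mult.assoc)

lemma ncmul_smul_right: "ncmul f (ncsmul a g :: 'k::comm_semiring_1 ncp) = ncsmul a (ncmul f g)"
  by (rule ext) (simp add: ncmul_def ncsmul_def sum_distrib_left mult.left_commute)

lemma ncpow_0 [simp]: "ncpow f 0 = ncone"
  by (simp add: ncpow_def)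

lemma ncpow_Suc [simp]: "ncpow f (Suc n) = ncmul f (ncpow f n)"
  by (simp add: ncpow_def)

lemma ncsupp_ncmul_subset:
  "ncsupp (ncmul f (g :: 'k::comm_semiring_1 ncp)) \<subseteq> (\<lambda>(a, b). a @ b) ` (ncsupp f \<times> ncsupp g)"
proof
  fix w assume "w \<in> ncsupp (ncmul f g)"
  then obtain i where "f (take i w) * g (drop i w) \<noteq> 0"
    unfolding ncsupp_def ncmul_def by (auto elim: sum.not_neutral_contains_not_neutral)
  then have "(take i w, drop i w) \<in> ncsupp f \<times> ncsupp g"
    by (auto simp: ncsupp_def)
  then show "w \<in> (\<lambda>(a, b). a @ b) ` (ncsupp f \<times> ncsupp g)"
    by (metis (no_types, lifting) append_take_drop_id case_prod_conv image_eqI)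
qed

lemma finite_ncsupp_ncmul:
  "finite (ncsupp f) \<Longrightarrow> finite (ncsupp g) \<Longrightarrow> finite (ncsupp (ncmul f (g :: 'k::comm_semiring_1 ncp)))"
  by (rule finite_subset [OF ncsupp_ncmul_subset]) auto

lemma finite_ncsupp_ncpow:
  "finite (ncsupp f) \<Longrightarrow> finite (ncsupp (ncpow f n :: 'k::comm_semiring_1 ncp))"
  by (induction n) (simp_all add: ncone_eq_ncmonom finite_ncsupp_ncmul)

lemma ncsupp_lincomb_subset:
  "ncsupp (\<lambda>w. \<Sum>i\<in>I. c i * (h i w :: 'k::comm_semiring_1)) \<subseteq> (\<Union>i\<in>I. ncsupp (h i))"
  by (auto simp: ncsupp_def elim!: sum.not_neutral_contains_not_neutral)

lemma wev_append: "wev f g (v1 @ v2) = ncmul (wev f g v1) (wev f g v2 :: 'k::comm_semiring_1 ncp)"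
  by (induction v1) (simp_all add: ncmul_assoc)

lemma wev_ncx_ncy: "wev ncx ncy v = (ncmonom v :: 'k::comm_semiring_1 ncp)"
  by (induction v) (simp_all add: ncx_eq_ncmonom ncy_eq_ncmonom ncone_eq_ncmonom ncmul_ncmonom)

lemma ncsubst_eq_sum:
  fixes u :: "'k::comm_semiring_1 ncp"
  assumes "finite A" "ncsupp u \<subseteq> A"
  shows "ncsubst u f g = (\<lambda>w. \<Sum>v\<in>A. u v * wev f g v w)"
  unfolding ncsubst_def
  by (rule ext, rule sum.mono_neutral_left) (use assms in \<open>auto simp: ncsupp_def\<close>)

lemma ncsubst_lincomb:
  fixes h :: "'i \<Rightarrow> 'k::comm_semiring_1 ncp"
  assumes "finite I" "\<And>i. i \<in> I \<Longrightarrow> finite (ncsupp (h i))"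
  shows "ncsubst (\<lambda>w. \<Sum>i\<in>I. c i * h i w) f g = (\<lambda>w. \<Sum>i\<in>I. c i * ncsubst (h i) f g w)"
proof -
  define A where "A = (\<Union>i\<in>I. ncsupp (h i))"
  have A: "finite A" "\<And>i. i \<in> I \<Longrightarrow> ncsupp (h i) \<subseteq> A"
    using assms by (auto simp: A_def)
  have "ncsubst (\<lambda>w. \<Sum>i\<in>I. c i * h i w) f g = (\<lambda>w. \<Sum>v\<in>A. (\<Sum>i\<in>I. c i * h i v) * wev f g v w)"
    using ncsupp_lincomb_subset [of c h I] A by (intro ncsubst_eq_sum) (auto simp: A_def)
  also have "\<dots> = (\<lambda>w. \<Sum>i\<in>I. c i * (\<Sum>v\<in>A. h i v * wev f g v w))"
    by (simp add: sum_distrib_right sum_distrib_left mult.assoc sum.swap [of _ A])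
  also have "\<dots> = (\<lambda>w. \<Sum>i\<in>I. c i * ncsubst (h i) f g w)"
    using A by (simp add: ncsubst_eq_sum)
  finally show ?thesis .
qed

lemma ncsubst_ncmonom: "ncsubst (ncmonom v :: 'k::comm_semiring_1 ncp) f g = wev f g v"
  unfolding ncsubst_def ncsupp_ncmonom by (simp add: ncmonom_def)

lemma ncsubst_ncx_ncy:
  fixes u :: "'k::comm_semiring_1 ncp"
  assumes "finite (ncsupp u)"
  shows "ncsubst u ncx ncy = u"
  using nc_expansion [OF assms order_refl, symmetric] by (simp add: ncsubst_def wev_ncx_ncy)

lemma ncsubst_ncmul:
  fixes a b :: "'k::comm_semiring_1 ncp"
  assumes fa: "finite (ncsupp a)" and fb: "finite (ncsupp b)"
  shows "ncsubst (ncmul a b) f g = ncmul (ncsubst a f g) (ncsubst b f g)"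
proof -
  define A where "A = ncsupp a"
  define B where "B = ncsupp b"
  have "ncmul a b = ncmul (\<lambda>w. \<Sum>v\<in>A. a v * ncmonom v w) (\<lambda>w. \<Sum>v\<in>B. b v * ncmonom v w)"
    using fa fb by (simp add: A_def B_def flip: nc_expansion)
  also have "\<dots> = (\<lambda>w. \<Sum>v1\<in>A. a v1 * (\<Sum>v2\<in>B. b v2 * ncmonom (v1 @ v2) w))"
    by (simp add: ncmul_lincomb_left ncmul_lincomb_right ncmul_ncmonom)
  also have "\<dots> = (\<lambda>w. \<Sum>vv\<in>A \<times> B. (a (fst vv) * b (snd vv)) * ncmonom (fst vv @ snd vv) w)"
    by (simp add: sum_distrib_left sum.cartesian_product mult.assoc case_prod_beta)
  finally have ab: "ncmul a b = \<dots>" .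
  have "ncsubst (ncmul a b) f g =
      (\<lambda>w. \<Sum>vv\<in>A \<times> B. (a (fst vv) * b (snd vv)) * ncmul (wev f g (fst vv)) (wev f g (snd vv)) w)"
    unfolding ab using fa fb
    by (subst ncsubst_lincomb) (simp_all add: A_def B_def ncsubst_ncmonom wev_append)
  also have "\<dots> = ncmul (\<lambda>w. \<Sum>v\<in>A. a v * wev f g v w) (\<lambda>w. \<Sum>v\<in>B. b v * wev f g v w)"
    by (simp add: ncmul_lincomb_left ncmul_lincomb_right sum_distrib_left sum.cartesian_product
        mult.assoc case_prod_beta)
  also have "\<dots> = ncmul (ncsubst a f g) (ncsubst b f g)"
    using fa fb by (simp add: ncsubst_eq_sum A_def B_def)
  finally show ?thesis .
qed

lemma ncsubst_ncone [simp]: "ncsubst (ncone :: 'k::comm_semiring_1 ncp) f g = ncone"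
  by (simp add: ncone_eq_ncmonom ncsubst_ncmonom)

lemma ncsubst_ncx [simp]: "ncsubst (ncx :: 'k::comm_semiring_1 ncp) f g = f"
  by (simp add: ncx_eq_ncmonom ncsubst_ncmonom flip: ncone_eq_ncmonom)

lemma ncsubst_ncy [simp]: "ncsubst (ncy :: 'k::comm_semiring_1 ncp) f g = g"
  by (simp add: ncy_eq_ncmonom ncsubst_ncmonom flip: ncone_eq_ncmonom)

lemma ncsubst_ncpow:
  fixes h :: "'k::comm_semiring_1 ncp"
  assumes "finite (ncsupp h)"
  shows "ncsubst (ncpow h n) f g = ncpow (ncsubst h f g) n"
  by (induction n) (simp_all add: ncsubst_ncmul assms finite_ncsupp_ncpow)

lemma ncsubst_ncsub:
  fixes a b :: "'k::comm_ring_1 ncp"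
  assumes "finite (ncsupp a)" "finite (ncsupp b)"
  shows "ncsubst (ncsub a b) f g = ncsub (ncsubst a f g) (ncsubst b f g)"
proof -
  have ab: "ncsub a b = (\<lambda>w. \<Sum>i\<in>{False, True}. (if i then 1 else -1) * (if i then a else b) w)"
    by (auto simp: ncsub_def)
  show ?thesis
    unfolding ab using assms by (subst ncsubst_lincomb) (auto simp: ncsub_def)
qed

section \<open>Ordering words and leading words\<close>

fun bin_val :: "bool list \<Rightarrow> nat" where
  "bin_val [] = 0"
| "bin_val (b # w) = of_bool b * 2 ^ length w + bin_val w"

definition word_rank :: "bool list \<Rightarrow> nat" where
  "word_rank w = 2 ^ length w + bin_val w"

lemma bin_val_less: "bin_val w < 2 ^ length w"
  by (induction w) auto

lemma bin_val_append: "bin_val (v @ w) = bin_val v * 2 ^ length w + bin_val w"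
  by (induction v) (auto simp: power_add algebra_simps)

lemma bin_val_replicate_True: "bin_val (replicate n True) + 1 = 2 ^ n"
  by (induction n) auto

lemma bin_val_inj: "length v = length w \<Longrightarrow> bin_val v = bin_val w \<Longrightarrow> v = w"
proof (induction v arbitrary: w)
  case (Cons a v)
  then obtain b w' where w: "w = b # w'" and len: "length v = length w'"
    by (cases w) auto
  have "a = b"
    using Cons.prems bin_val_less [of v] bin_val_less [of w'] w len by (cases a; cases b) auto
  then show ?case
    using Cons w len by simp
qed simp

lemma word_rank_append: "word_rank (v @ w) = word_rank v * 2 ^ length w + bin_val w"
  by (simp add: word_rank_def bin_val_append power_add algebra_simps)

lemma word_rank_less_if_length_less: "length v < length w \<Longrightarrow> word_rank v < word_rank w"
proof -
  assume "length v < length w"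
  then have "(2::nat) ^ Suc (length v) \<le> 2 ^ length w"
    by (intro power_increasing) auto
  then show ?thesis
    using bin_val_less [of v] by (simp add: word_rank_def)
qed

lemma length_le_if_word_rank_le: "word_rank v \<le> word_rank w \<Longrightarrow> length v \<le> length w"
  using word_rank_less_if_length_less [of w v] by linarith

lemma inj_word_rank: "inj word_rank"
proof
  fix v w assume rank: "word_rank v = word_rank w"
  then have "length v = length w"
    using length_le_if_word_rank_le [of v w] length_le_if_word_rank_le [of w v] by simp
  with rank show "v = w"
    by (simp add: word_rank_def bin_val_inj)
qed

lemma word_rank_le_replicate_True: "length w \<le> n \<Longrightarrow> word_rank w \<le> word_rank (replicate n True)"
proof (cases "length w = n")
  case True
  then show ?thesis
    using bin_val_less [of w] bin_val_replicate_True [of n] by (simp add: word_rank_def)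
qed (simp add: less_imp_le word_rank_less_if_length_less)

lemma word_rank_append_less:
  assumes v1: "word_rank v1 \<le> word_rank w1" and v2: "word_rank v2 \<le> word_rank w2"
    and ne: "v1 \<noteq> w1 \<or> v2 \<noteq> w2"
  shows "word_rank (v1 @ v2) < word_rank (w1 @ w2)"
proof (cases "length v1 = length w1 \<and> length v2 = length w2")
  case False
  then show ?thesis
    using length_le_if_word_rank_le [OF v1] length_le_if_word_rank_le [OF v2]
    by (intro word_rank_less_if_length_less) auto
next
  case True
  then have len1: "length v1 = length w1" and len2: "length v2 = length w2"
    by simp_all
  define m where "m = length w2"
  have bin2: "bin_val v2 \<le> bin_val w2" "bin_val v2 < 2 ^ m"
    using v2 len2 bin_val_less [of v2] by (simp_all add: word_rank_def m_def)
  show ?thesis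
  proof (cases "v1 = w1")
    case True
    with ne have "bin_val v2 \<noteq> bin_val w2"
      using bin_val_inj len2 by blast
    with bin2 True len2 show ?thesis
      by (simp add: word_rank_append m_def)
  next
    case False
    then have "word_rank v1 \<noteq> word_rank w1"
      using inj_word_rank by (simp add: inj_eq)
    with v1 have "word_rank v1 + 1 \<le> word_rank w1"
      by simp
    have "word_rank v1 * 2 ^ m + bin_val v2 < (word_rank v1 + 1) * 2 ^ m"
      using bin2 by simp
    also have "\<dots> \<le> word_rank w1 * 2 ^ m"
      using \<open>word_rank v1 + 1 \<le> word_rank w1\<close> by (rule mult_right_mono) simp
    finally show ?thesis
      using len2 by (simp add: word_rank_append m_def)
  qed
qed

definition leading_word :: "'k::zero ncp \<Rightarrow> bool list \<Rightarrow> bool" where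
  "leading_word f L \<longleftrightarrow> f L \<noteq> 0 \<and> (\<forall>w. f w \<noteq> 0 \<longrightarrow> word_rank w \<le> word_rank L)"

lemma finite_ncsupp_if_leading_word: "leading_word f L \<Longrightarrow> finite (ncsupp f)"
proof -
  assume "leading_word f L"
  then have "ncsupp f \<subseteq> word_rank -` {..word_rank L}"
    by (auto simp: leading_word_def ncsupp_def)
  then show ?thesis
    by (rule finite_subset) (simp add: finite_vimageI inj_word_rank)
qed

lemma ncdeg_eq_length_leading_word: "leading_word f L \<Longrightarrow> ncdeg f = length L"
  unfolding ncdeg_def leading_word_def ncsupp_def
  by (intro Max_eqI) (auto intro: finite_subset [of _ "{..length L}"] length_le_if_word_rank_le)

lemma leading_word_ncmonom: "leading_word (ncmonom v :: 'k::zero_neq_one ncp) v"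
  by (auto simp: leading_word_def ncmonom_def)

lemma leading_word_smul:
  "a \<noteq> 0 \<Longrightarrow> leading_word f L \<Longrightarrow> leading_word (ncsmul a f :: 'k::idom ncp) L"
  by (auto simp: leading_word_def ncsmul_def)

lemma ncmul_at_append_leading_words:
  fixes f g :: "'k::comm_semiring_1 ncp"
  assumes f: "leading_word f L" and g: "leading_word g M"
  shows "ncmul f g (L @ M) = f L * g M"
proof -
  have "f (take i (L @ M)) * g (drop i (L @ M)) = 0" if "i \<noteq> length L" "i \<le> length (L @ M)" for i
  proof (rule ccontr)
    assume "f (take i (L @ M)) * g (drop i (L @ M)) \<noteq> 0"
    then have "f (take i (L @ M)) \<noteq> 0" "g (drop i (L @ M)) \<noteq> 0"
      by auto
    then have "word_rank (take i (L @ M)) \<le> word_rank L" "word_rank (drop i (L @ M)) \<le> word_rank M"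
      using f g unfolding leading_word_def by blast+
    moreover have "take i (L @ M) \<noteq> L"
      using that by (auto dest: arg_cong [of _ _ length])
    ultimately have "word_rank (take i (L @ M) @ drop i (L @ M)) < word_rank (L @ M)"
      by (blast intro: word_rank_append_less)
    then show False
      unfolding append_take_drop_id by simp
  qed
  then have "ncmul f g (L @ M) = (\<Sum>i\<le>length (L @ M). if i = length L then f L * g M else 0)"
    unfolding ncmul_def by (intro sum.cong) auto
  then show ?thesis
    by simp
qed

lemma leading_word_ncmul:
  fixes f g :: "'k::idom ncp"
  assumes f: "leading_word f L" and g: "leading_word g M"
  shows "leading_word (ncmul f g) (L @ M)"
  unfolding leading_word_def
proof (intro conjI allI impI)
  show "ncmul f g (L @ M) \<noteq> 0"
    using f g by (simp add: ncmul_at_append_leading_words leading_word_def)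
next
  fix w assume "ncmul f g w \<noteq> 0"
  then obtain i where "f (take i w) * g (drop i w) \<noteq> 0"
    unfolding ncmul_def by (auto elim: sum.not_neutral_contains_not_neutral)
  then have "word_rank (take i w) \<le> word_rank L" "word_rank (drop i w) \<le> word_rank M"
    using f g unfolding leading_word_def by auto
  then have "take i w = L \<and> drop i w = M \<or> word_rank (take i w @ drop i w) < word_rank (L @ M)"
    using word_rank_append_less by blast
  then have "word_rank (take i w @ drop i w) \<le> word_rank (L @ M)"
    by auto
  then show "word_rank w \<le> word_rank (L @ M)"
    by simp
qed

lemma leading_word_ncpow:
  "leading_word f L \<Longrightarrow> leading_word (ncpow f n :: 'k::idom ncp) (concat (replicate n L))"
  by (induction n) (simp_all add: ncone_eq_ncmonom leading_word_ncmonom leading_word_ncmul)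

lemma leading_word_replicate_True:
  assumes "f (replicate n True) \<noteq> 0" and "\<And>w. f w \<noteq> 0 \<Longrightarrow> length w \<le> n"
  shows "leading_word f (replicate n True)"
  using assms by (simp add: leading_word_def word_rank_le_replicate_True)

lemma leading_word_lincomb:
  fixes f :: "'i \<Rightarrow> 'k::idom ncp"
  assumes "finite S" and l0: "l0 \<in> S" and c: "\<forall>l\<in>S. c l \<noteq> 0"
    and lead: "\<forall>l\<in>S. leading_word (f l) (L l)" and inj: "inj_on L S"
    and greatest: "\<forall>l\<in>S. word_rank (L l) \<le> word_rank (L l0)"
  shows "leading_word (\<lambda>w. \<Sum>l\<in>S. c l * f l w) (L l0)"
  unfolding leading_word_def
proof (intro conjI allI impI)
  have "f l (L l0) = 0" if "l \<in> S - {l0}" for l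
  proof (rule ccontr)
    assume "f l (L l0) \<noteq> 0"
    then have "word_rank (L l0) \<le> word_rank (L l)"
      using lead that by (auto simp: leading_word_def)
    then have "word_rank (L l0) = word_rank (L l)"
      using greatest that by (auto intro: le_antisym)
    then have "L l0 = L l"
      using inj_word_rank by (simp add: inj_eq)
    then show False
      using inj that l0 by (auto dest: inj_onD)
  qed
  then have "(\<Sum>l\<in>S. c l * f l (L l0)) = c l0 * f l0 (L l0)"
    using \<open>finite S\<close> l0 by (simp add: sum.remove)
  then show "(\<Sum>l\<in>S. c l * f l (L l0)) \<noteq> 0"
    using c lead l0 by (simp add: leading_word_def)
next
  fix w assume "(\<Sum>l\<in>S. c l * f l w) \<noteq> 0"
  then obtain l where "l \<in> S" "f l w \<noteq> 0"
    by (auto elim: sum.not_neutral_contains_not_neutral)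
  then show "word_rank w \<le> word_rank (L l0)"
    using lead greatest by (meson leading_word_def order_trans)
qed

lemma ex_max_word_rank:
  fixes L :: "'i \<Rightarrow> bool list"
  assumes "finite S" "S \<noteq> {}"
  obtains l0 where "l0 \<in> S" "\<forall>l\<in>S. word_rank (L l) \<le> word_rank (L l0)"
proof -
  define m where "m = Max ((\<lambda>l. word_rank (L l)) ` S)"
  have "m \<in> (\<lambda>l. word_rank (L l)) ` S"
    using assms by (simp add: m_def)
  moreover have "\<forall>l\<in>S. word_rank (L l) \<le> m"
    using assms by (simp add: m_def)
  ultimately show thesis
    using that by auto
qed

section \<open>Leading words of the basis elements \<open>u_ab\<close>\<close>

lemma finite_ncsupp_ncx [simp]: "finite (ncsupp (ncx :: 'k::zero_neq_one ncp))"
  by (simp add: ncx_eq_ncmonom)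

lemma finite_ncsupp_ncy [simp]: "finite (ncsupp (ncy :: 'k::zero_neq_one ncp))"
  by (simp add: ncy_eq_ncmonom)

lemma nccomm_eq: "(nccomm :: 'k::comm_ring_1 ncp) = ncsub (ncmonom [False, True]) (ncmonom [True, False])"
  by (simp add: nccomm_def ncx_eq_ncmonom ncy_eq_ncmonom ncmul_ncmonom)

lemma leading_word_nccomm: "leading_word (nccomm :: 'k::comm_ring_1 ncp) [True, False]"
  by (auto simp: nccomm_eq leading_word_def ncsub_def ncmonom_def word_rank_def)

lemma finite_ncsupp_nccomm [simp]: "finite (ncsupp (nccomm :: 'k::comm_ring_1 ncp))"
  using leading_word_nccomm by (rule finite_ncsupp_if_leading_word)

lemma finite_ncsupp_ubasis [simp]: "finite (ncsupp (ubasis l :: 'k::comm_ring_1 ncp))"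
  by (induction l rule: ubasis.induct)
    (simp_all add: ncone_eq_ncmonom finite_ncsupp_ncmul finite_ncsupp_ncpow)

lemma ncsubst_nccomm: "ncsubst (nccomm :: 'k::comm_ring_1 ncp) f g = ncsub (ncmul f g) (ncmul g f)"
  by (simp add: nccomm_def ncsubst_ncsub ncsubst_ncmul finite_ncsupp_ncmul)

fun join_yx :: "bool list list \<Rightarrow> bool list" where
  "join_yx [] = []"
| "join_yx [s] = s"
| "join_yx (s # ss) = s @ True # False # join_yx ss"

definition xy_block :: "bool list \<Rightarrow> nat \<times> nat \<Rightarrow> bool list" where
  "xy_block xw = (\<lambda>(a, b). concat (replicate a xw) @ replicate b True)"

text \<open>The leading word of \<open>u_ab(f, g)\<close> when \<open>f\<close> has leading word \<open>xw\<close> and \<open>g\<close> has leading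
  word \<open>y\<close>: each commutator contributes its leading word \<open>yx\<close>.\<close>

definition ubasis_word :: "bool list \<Rightarrow> (nat \<times> nat) list \<Rightarrow> bool list" where
  "ubasis_word xw l = join_yx (map (xy_block xw) l)"

lemma ubasis_word_simps [simp]:
  "ubasis_word xw [] = []"
  "ubasis_word xw [(a, b)] = concat (replicate a xw) @ replicate b True"
  "ubasis_word xw ((a, b) # v # va) =
     concat (replicate a xw) @ replicate b True @ True # False # ubasis_word xw (v # va)"
  by (simp_all add: ubasis_word_def xy_block_def)

lemma leading_word_ncsubst_ubasis:
  fixes f g :: "'k::idom ncp"
  assumes f: "leading_word f xw" and g: "leading_word g [True]"
    and comm: "leading_word (ncsubst nccomm f g) [True, False]"
  shows "l \<noteq> [] \<Longrightarrow> leading_word (ncsubst (ubasis l) f g) (ubasis_word xw l)"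
proof (induction l rule: ubasis.induct)
  case (2 a b)
  have "leading_word (ncmul (ncpow f a) (ncpow g b)) (concat (replicate a xw) @ concat (replicate b [True]))"
    using f g by (intro leading_word_ncmul leading_word_ncpow)
  then show ?case
    by (simp add: ncsubst_ncmul ncsubst_ncpow finite_ncsupp_ncpow)
next
  case (3 a b v va)
  have "leading_word (ncmul (ncmul (ncmul (ncpow f a) (ncpow g b)) (ncsubst nccomm f g))
      (ncsubst (ubasis (v # va)) f g))
    (((concat (replicate a xw) @ concat (replicate b [True])) @ [True, False]) @ ubasis_word xw (v # va))"
    using f g comm 3 by (intro leading_word_ncmul leading_word_ncpow) simp_all
  then show ?case
    by (simp add: ncsubst_ncmul ncsubst_ncpow finite_ncsupp_ncpow finite_ncsupp_ncmul)
qed simp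

lemma leading_word_ubasis:
  assumes "l \<noteq> []"
  shows "leading_word (ubasis l :: 'k::idom ncp) (ubasis_word [False] l)"
proof -
  have "leading_word (ncx :: 'k ncp) [False]" "leading_word (ncy :: 'k ncp) [True]"
    by (simp_all add: ncx_eq_ncmonom ncy_eq_ncmonom leading_word_ncmonom)
  then show ?thesis
    using leading_word_ncsubst_ubasis [of ncx "[False]" ncy l] assms leading_word_nccomm
    by (simp add: ncsubst_ncx_ncy)
qed

text \<open>Sorted words \<open>x\<^sup>i y\<^sup>j\<close> contain no factor \<open>yx\<close>, so the separators of \<open>join_yx\<close> can be
  located. The simp rule \<open>le_bool_def\<close> turns \<open>sorted\<close> on \<open>bool\<close> into \<open>sorted_wrt (\<longrightarrow>)\<close>
  in assumptions but not in the goal, hence it is deleted below.\<close>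

lemma sorted_append_yx_Nil: "sorted t \<Longrightarrow> True # False # v = t @ True # False # w \<Longrightarrow> t = []"
proof (cases t)
  case (Cons x t')
  assume "sorted t" "True # False # v = t @ True # False # w"
  then show ?thesis using Cons by (cases t') auto
qed

lemma sorted_append_yx_cancel:
  "sorted s \<Longrightarrow> sorted t \<Longrightarrow> s @ True # False # v = t @ True # False # w \<Longrightarrow> s = t"
proof (induction s arbitrary: t)
  case Nil
  then show ?case
    using sorted_append_yx_Nil [OF Nil.prems(2)] Nil.prems(3) by (metis append_Nil)
next
  case (Cons x s)
  show ?case
  proof (cases t)
    case Nil
    then show ?thesis
      using sorted_append_yx_Nil [OF Cons.prems(1), of w v] Cons.prems(3) by simp
  next
    case (Cons y t')
    then show ?thesis
      using Cons.IH [of t'] Cons.prems by (simp add: sorted_simps(2) del: le_bool_def)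
  qed
qed

lemma not_sorted_append_yx: "\<not> sorted (s @ True # False # w)"
  by (simp add: sorted_append)

lemma join_yx_inj:
  "\<forall>s\<in>set ss \<union> set ts. sorted s \<Longrightarrow> ss \<noteq> [] \<Longrightarrow> ts \<noteq> [] \<Longrightarrow> join_yx ss = join_yx ts \<Longrightarrow> ss = ts"
proof (induction ss arbitrary: ts rule: join_yx.induct)
  case (2 s)
  show ?case
  proof (cases ts rule: join_yx.cases)
    case (3 t t' ts')
    then have "s = t @ True # False # join_yx (t' # ts')"
      using "2.prems"(4) by simp
    moreover have "sorted s"
      using "2.prems"(1) by (simp del: le_bool_def)
    ultimately show ?thesis
      using not_sorted_append_yx by blast
  qed (use "2.prems" in simp_all)
next
  case (3 s s' ss)
  show ?case
  proof (cases ts rule: join_yx.cases)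
    case (2 t)
    then have "t = s @ True # False # join_yx (s' # ss)"
      using "3.prems"(4) by simp
    moreover have "sorted t"
      using "3.prems"(1) 2 by (simp del: le_bool_def)
    ultimately show ?thesis
      using not_sorted_append_yx by blast
  next
    case (3 t t' ts')
    with "3.prems" have "s = t"
      using sorted_append_yx_cancel by (simp del: le_bool_def)
    moreover have "s' # ss = t' # ts'"
      using "3.IH" [of "t' # ts'"] "3.prems" 3 \<open>s = t\<close> by (simp del: le_bool_def)
    ultimately show ?thesis
      using 3 by simp
  qed (use "3.prems" in simp)
qed simp

lemma inj_on_ubasis_word:
  assumes nonempty: "\<forall>l\<in>S. l \<noteq> []" and sorted: "\<forall>ab\<in>(\<Union>l\<in>S. set l). sorted (xy_block xw ab)"
    and inj: "inj_on (xy_block xw) (\<Union>l\<in>S. set l)"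
  shows "inj_on (ubasis_word xw) S"
proof
  fix l l' assume l: "l \<in> S" "l' \<in> S" and eq: "ubasis_word xw l = ubasis_word xw l'"
  then have "map (xy_block xw) l = map (xy_block xw) l'"
    using nonempty sorted by (intro join_yx_inj) (auto simp: ubasis_word_def)
  then show "l = l'"
    using inj l by (auto intro: map_inj_on inj_on_subset)
qed

lemma count_list_replicate_same [simp]: "count_list (replicate n x) x = n"
  by (induction n) auto

lemma inj_on_ubasis_word_x: "\<forall>l\<in>S. l \<noteq> [] \<Longrightarrow> inj_on (ubasis_word [False]) S"
proof (rule inj_on_ubasis_word)
  show "inj_on (xy_block [False]) (\<Union>l\<in>S. set l)"
  proof
    fix ab ab' assume "xy_block [False] ab = xy_block [False] ab'"
    then have "count_list (xy_block [False] ab) b = count_list (xy_block [False] ab') b" for b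
      by simp
    from this [of False] this [of True] show "ab = ab'"
      by (auto simp: xy_block_def split: prod.splits)
  qed
qed (auto simp: xy_block_def sorted_append)

lemma concat_replicate_replicate: "concat (replicate a (replicate k x)) = replicate (a * k) x"
  by (induction a) (simp_all add: replicate_add)

lemma inj_on_ubasis_word_y_power:
  assumes "\<forall>l\<in>S. l \<noteq> []" and small: "\<forall>l\<in>S. \<forall>(a, b)\<in>set l. b < k"
  shows "inj_on (ubasis_word (replicate k True)) S"
proof (rule inj_on_ubasis_word)
  show "inj_on (xy_block (replicate k True)) (\<Union>l\<in>S. set l)"
  proof
    fix ab ab' assume "ab \<in> (\<Union>l\<in>S. set l)" "ab' \<in> (\<Union>l\<in>S. set l)"
      and "xy_block (replicate k True) ab = xy_block (replicate k True) ab'"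
    moreover obtain a b a' b' where "ab = (a, b)" "ab' = (a', b')"
      by fastforce
    ultimately have "a * k + b = a' * k + b'" "b < k" "b' < k"
      using small by (auto simp: xy_block_def concat_replicate_replicate dest: arg_cong [of _ _ length])
    moreover have "(a * k + b) div k = a" "(a' * k + b') div k = a'"
      using \<open>b < k\<close> \<open>b' < k\<close> by simp_all
    ultimately show "ab = ab'"
      using \<open>ab = (a, b)\<close> \<open>ab' = (a', b')\<close> by simp
  qed
qed (use assms in \<open>auto simp: xy_block_def concat_replicate_replicate simp flip: replicate_add\<close>)

lemma length_le_join_yx: "s \<in> set ss \<Longrightarrow> length s \<le> length (join_yx ss)"
  by (induction ss rule: join_yx.induct) auto

lemma length_ubasis_word_ge:
  assumes "(a, b) \<in> set l"
  shows "a * length xw + b \<le> length (ubasis_word xw l)"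
proof -
  have "length (xy_block xw (a, b)) \<le> length (ubasis_word xw l)"
    unfolding ubasis_word_def using assms by (intro length_le_join_yx) simp
  then show ?thesis
    by (simp add: xy_block_def length_concat sum_list_replicate)
qed

lemma ubasis_word_no_x: "\<forall>(a, b)\<in>set l. a = 0 \<Longrightarrow> ubasis_word xw l = ubasis_word xw' l"
  by (induction l rule: ubasis.induct) auto

lemma count_list_ubasis_word_y_power:
  "count_list (ubasis_word (replicate k True) l) True =
     count_list (ubasis_word (replicate k True) l) False + (\<Sum>(a, b)\<leftarrow>l. a * k + b)"
  by (induction l rule: ubasis.induct) (simp_all add: concat_replicate_replicate)

section \<open>The subspace \<open>V\<close>\<close>

lemma zero_in_ncV: "(\<lambda>w. 0) \<in> ncV"
  unfolding ncV_def by (auto intro!: exI [of _ 0])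

lemma count_list_balanced_if_ncpow_nccomm:
  "ncpow (nccomm :: 'k::comm_ring_1 ncp) j w \<noteq> 0 \<Longrightarrow> count_list w True = count_list w False"
proof (induction j arbitrary: w)
  case 0
  then show ?case
    by (simp add: ncone_def split: if_splits)
next
  case (Suc j)
  then obtain i where "nccomm (take i w) * ncpow nccomm j (drop i w) \<noteq> (0::'k)"
    by (auto simp: ncmul_def elim: sum.not_neutral_contains_not_neutral)
  then have "take i w = [False, True] \<or> take i w = [True, False]" "ncpow (nccomm::'k ncp) j (drop i w) \<noteq> 0"
    by (auto simp: nccomm_eq ncsub_def ncmonom_def split: if_splits)
  then have "count_list (take i w) True = count_list (take i w) False"
    "count_list (drop i w) True = count_list (drop i w) False"
    using Suc.IH by auto
  moreover have "count_list w b = count_list (take i w) b + count_list (drop i w) b" for b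
    using count_list_append [of "take i w" "drop i w" b] by simp
  ultimately show ?case
    by simp
qed

lemma count_list_balanced_if_ncV:
  fixes v :: "'k::comm_ring_1 ncp"
  assumes "v \<in> ncV" and "v w \<noteq> 0"
  shows "count_list w True = count_list w False"
proof -
  obtain N a where "v = (\<lambda>w. \<Sum>k<N. a k * ncpow nccomm k w)"
    using assms(1) by (auto simp: ncV_def)
  with assms(2) obtain j where "a j * ncpow (nccomm :: 'k ncp) j w \<noteq> 0"
    by (auto elim: sum.not_neutral_contains_not_neutral)
  then have "ncpow (nccomm :: 'k ncp) j w \<noteq> 0"
    by auto
  then show ?thesis
    by (rule count_list_balanced_if_ncpow_nccomm)
qed

lemma unbalanced_not_in_ncV_degbar_ge:
  fixes R :: "'k::comm_ring_1 ncp"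
  assumes "finite (ncsupp R)" and "R w \<noteq> 0" and unbalanced: "count_list w True \<noteq> count_list w False"
  shows "R \<notin> ncV \<and> length w \<le> degbar R"
proof
  show "R \<notin> ncV"
    using assms count_list_balanced_if_ncV by blast
  have "nchomog (length w) R w \<noteq> 0"
    using assms(2) by (simp add: nchomog_def)
  then have "nchomog (length w) R \<notin> ncV"
    using unbalanced count_list_balanced_if_ncV by blast
  moreover have "{s. nchomog s R \<notin> ncV} \<subseteq> length ` ncsupp R"
  proof
    fix s assume "s \<in> {s. nchomog s R \<notin> ncV}"
    then have "nchomog s R \<noteq> (\<lambda>w. 0)"
      using zero_in_ncV by auto
    then obtain v where "nchomog s R v \<noteq> 0"
      by (auto simp: fun_eq_iff)
    then show "s \<in> length ` ncsupp R"
      by (auto simp: nchomog_def ncsupp_def split: if_splits)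
  qed
  ultimately show "length w \<le> degbar R"
    unfolding degbar_def using assms(1) by (auto intro: Max_ge finite_subset)
qed

section \<open>The triangular automorphism\<close>

lemma poly_in_y_eq_lincomb:
  "poly_in_y p = (\<lambda>w. \<Sum>j\<le>degree p. coeff p j * ncmonom (replicate j True) w)"
proof
  fix w :: "bool list"
  have "(\<Sum>j\<le>degree p. coeff p j * ncmonom (replicate j True) w) =
      (\<Sum>j\<le>degree p. if j = length w \<and> w = replicate (length w) True then coeff p j else 0)"
    by (intro sum.cong) (auto simp: ncmonom_def)
  then show "poly_in_y p w = (\<Sum>j\<le>degree p. coeff p j * ncmonom (replicate j True) w)"
    by (auto simp: poly_in_y_def coeff_eq_0)
qed

lemma ncmul_poly_in_y_ncy: "ncmul (poly_in_y p) ncy = ncmul ncy (poly_in_y (p :: 'k::comm_semiring_1 poly))"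
  unfolding poly_in_y_eq_lincomb ncy_eq_ncmonom ncmul_lincomb_left ncmul_lincomb_right ncmul_ncmonom
  by (simp add: replicate_append_same)

lemma ncsubst_nccomm_triangular:
  fixes \<alpha> \<beta> \<gamma> :: "'k::comm_ring_1"
  shows "ncsubst nccomm (ncadd (ncsmul \<alpha> ncx) (poly_in_y p)) (ncadd (ncsmul \<beta> ncy) (ncsmul \<gamma> ncone))
     = ncsmul (\<alpha> * \<beta>) nccomm"
  unfolding ncsubst_nccomm ncmul_add_left ncmul_add_right ncmul_smul_left ncmul_smul_right
    ncmul_one_left ncmul_one_right ncmul_poly_in_y_ncy
  by (rule ext) (simp add: ncadd_def ncsmul_def ncsub_def nccomm_def algebra_simps)

lemma leading_word_triangular_x:
  fixes \<alpha> :: "'k::comm_ring_1"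
  assumes "degree p > 0"
  shows "leading_word (ncadd (ncsmul \<alpha> ncx) (poly_in_y p)) (replicate (degree p) True)"
proof (rule leading_word_replicate_True)
  have "coeff p (degree p) \<noteq> 0"
    using assms by auto
  then show "ncadd (ncsmul \<alpha> ncx) (poly_in_y p) (replicate (degree p) True) \<noteq> 0"
    using assms by (cases "degree p") (auto simp: ncadd_def ncsmul_def ncx_def poly_in_y_def)
next
  fix w assume "ncadd (ncsmul \<alpha> ncx) (poly_in_y p) w \<noteq> 0"
  then have "w = [False] \<or> coeff p (length w) \<noteq> 0"
    by (auto simp: ncadd_def ncsmul_def ncx_def poly_in_y_def split: if_splits)
  then show "length w \<le> degree p"
    using assms by (auto intro: le_degree)
qed

lemma leading_word_triangular_y:
  fixes \<beta> \<gamma> :: "'k::comm_ring_1"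
  assumes "\<beta> \<noteq> 0"
  shows "leading_word (ncadd (ncsmul \<beta> ncy) (ncsmul \<gamma> ncone)) [True]"
proof -
  have "leading_word (ncadd (ncsmul \<beta> ncy) (ncsmul \<gamma> ncone)) (replicate 1 True)"
    using assms by (intro leading_word_replicate_True)
      (auto simp: ncadd_def ncsmul_def ncy_def ncone_def split: if_splits)
  then show ?thesis
    by simp
qed

lemma leading_word_tri_aut_ubasis:
  fixes \<alpha> \<beta> \<gamma> :: "'k::idom"
  assumes "\<alpha> \<noteq> 0" "\<beta> \<noteq> 0" "degree p > 0" "l \<noteq> []"
  shows "leading_word (tri_aut \<alpha> p \<beta> \<gamma> (ubasis l)) (ubasis_word (replicate (degree p) True) l)"
  unfolding tri_aut_def using assms
  by (intro leading_word_ncsubst_ubasis leading_word_triangular_x leading_word_triangular_y)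
    (simp_all add: ncsubst_nccomm_triangular leading_word_smul leading_word_nccomm)

lemma tri_aut_lincomb:
  fixes c :: "(nat \<times> nat) list \<Rightarrow> 'k::comm_ring_1"
  assumes "finite S"
  shows "tri_aut \<alpha> p \<beta> \<gamma> (\<lambda>w. \<Sum>l\<in>S. c l * ubasis l w) = (\<lambda>w. \<Sum>l\<in>S. c l * tri_aut \<alpha> p \<beta> \<gamma> (ubasis l) w)"
  unfolding tri_aut_def using assms by (simp add: ncsubst_lincomb)

lemma count_list_ubasis_word_y_power_less:
  assumes "k > 0" and "ubasis_word (replicate k True) l \<noteq> ubasis_word [False] l"
  shows "count_list (ubasis_word (replicate k True) l) False < count_list (ubasis_word (replicate k True) l) True"
proof -
  have "\<not> (\<forall>(a, b)\<in>set l. a = 0)"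
    using assms(2) ubasis_word_no_x [of l "replicate k True" "[False]"] by auto
  then obtain a b where "(a, b) \<in> set l" "a \<noteq> 0"
    by auto
  then have "0 < a * k + b" "a * k + b \<le> (\<Sum>(a, b)\<leftarrow>l. a * k + b)"
    using assms(1) member_le_sum_list [of "a * k + b" "map (\<lambda>(a, b). a * k + b) l"] by force+
  then show ?thesis
    using count_list_ubasis_word_y_power [of k l] by linarith
qed

lemma leading_word_ubasis_lincomb:
  fixes c :: "(nat \<times> nat) list \<Rightarrow> 'k::idom"
  assumes "finite S" "\<forall>l\<in>S. c l \<noteq> 0 \<and> l \<noteq> []"
    and "l0 \<in> S" "\<forall>l\<in>S. word_rank (ubasis_word [False] l) \<le> word_rank (ubasis_word [False] l0)"
  shows "leading_word (\<lambda>w. \<Sum>l\<in>S. c l * ubasis l w) (ubasis_word [False] l0)"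
  using assms inj_on_ubasis_word_x [of S]
  by (intro leading_word_lincomb) (auto intro: leading_word_ubasis)

lemma leading_word_tri_aut_lincomb:
  fixes c :: "(nat \<times> nat) list \<Rightarrow> 'k::idom" and p :: "'k poly"
  defines "Lk \<equiv> ubasis_word (replicate (degree p) True)"
  assumes "finite S" "\<forall>l\<in>S. c l \<noteq> 0 \<and> l \<noteq> []" and "inj_on Lk S"
    and "l0 \<in> S" "\<forall>l\<in>S. word_rank (Lk l) \<le> word_rank (Lk l0)"
    and "\<alpha> \<noteq> 0" "\<beta> \<noteq> 0" "degree p > 0"
  shows "leading_word (tri_aut \<alpha> p \<beta> \<gamma> (\<lambda>w. \<Sum>l\<in>S. c l * ubasis l w)) (Lk l0)"
  unfolding tri_aut_lincomb [OF assms(2)] using assms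
  by (intro leading_word_lincomb) (simp_all add: leading_word_tri_aut_ubasis)

lemma ncdeg_tri_aut_eq_if_x_free:
  fixes c :: "(nat \<times> nat) list \<Rightarrow> 'k::idom"
  assumes S: "finite S" "S \<noteq> {}" "\<forall>l\<in>S. c l \<noteq> 0 \<and> l \<noteq> []" and no_x: "\<forall>l\<in>S. \<forall>(a, b)\<in>set l. a = 0"
    and "\<alpha> \<noteq> 0" "\<beta> \<noteq> 0" "degree p > 0"
  shows "ncdeg (tri_aut \<alpha> p \<beta> \<gamma> (\<lambda>w. \<Sum>l\<in>S. c l * ubasis l w)) = ncdeg (\<lambda>w. \<Sum>l\<in>S. c l * ubasis l w)"
proof -
  let ?L = "ubasis_word [False]" and ?Lk = "ubasis_word (replicate (degree p) True)"
  have words: "?Lk l = ?L l" if "l \<in> S" for l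
    using no_x that by (simp add: ubasis_word_no_x)
  obtain l0 where l0: "l0 \<in> S" "\<forall>l\<in>S. word_rank (?L l) \<le> word_rank (?L l0)"
    using ex_max_word_rank [OF S(1,2), where L = ?L] by blast
  have "inj_on ?Lk S"
    using inj_on_ubasis_word_x [of S] S(3) by (simp add: words cong: inj_on_cong)
  then have "leading_word (tri_aut \<alpha> p \<beta> \<gamma> (\<lambda>w. \<Sum>l\<in>S. c l * ubasis l w)) (?Lk l0)"
    using S l0 assms by (intro leading_word_tri_aut_lincomb) (simp_all add: words)
  moreover have "leading_word (\<lambda>w. \<Sum>l\<in>S. c l * ubasis l w) (?L l0)"
    using S l0 by (intro leading_word_ubasis_lincomb)
  ultimately show ?thesis
    using words [OF l0(1)] by (simp add: ncdeg_eq_length_leading_word)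
qed

lemma degbar_tri_aut_ge_if_x_occurs:
  fixes S :: "(nat \<times> nat) list set" and c :: "(nat \<times> nat) list \<Rightarrow> 'k::idom"
  defines "u \<equiv> \<lambda>w. \<Sum>l\<in>S. c l * ubasis l w"
  assumes S: "finite S" "\<forall>l\<in>S. c l \<noteq> 0 \<and> l \<noteq> []" and x: "la \<in> S" "(a, b) \<in> set la" "a \<noteq> 0"
    and \<alpha>: "\<alpha> \<noteq> 0" and \<beta>: "\<beta> \<noteq> 0" and deg: "ncdeg u < degree p"
  shows "tri_aut \<alpha> p \<beta> \<gamma> u \<notin> ncV \<and> degree p \<le> degbar (tri_aut \<alpha> p \<beta> \<gamma> u)"
proof -
  define k where "k = degree p"
  let ?L = "ubasis_word [False]" and ?Lk = "ubasis_word (replicate k True)"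
  have "S \<noteq> {}" "k > 0"
    using x(1) deg unfolding k_def by auto
  obtain l0 where l0: "l0 \<in> S" "\<forall>l\<in>S. word_rank (?L l) \<le> word_rank (?L l0)"
    using ex_max_word_rank [OF S(1) \<open>S \<noteq> {}\<close>, where L = ?L] by blast
  have "ncdeg u = length (?L l0)"
    unfolding u_def using S l0 by (intro ncdeg_eq_length_leading_word leading_word_ubasis_lincomb)
  then have short: "length (?L l) < k" if "l \<in> S" for l
    using length_le_if_word_rank_le [OF l0(2) [rule_format, OF that]] deg unfolding k_def by linarith
  have "b' < k" if "l \<in> S" "(a', b') \<in> set l" for l a' b'
    using length_ubasis_word_ge [OF that(2), of "[False]"] short [OF that(1)] by simp
  then have "inj_on ?Lk S"
    using S(2) by (intro inj_on_ubasis_word_y_power) auto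
  moreover obtain l2 where l2: "l2 \<in> S" "\<forall>l\<in>S. word_rank (?Lk l) \<le> word_rank (?Lk l2)"
    using ex_max_word_rank [OF S(1) \<open>S \<noteq> {}\<close>, where L = ?Lk] by blast
  ultimately have lead: "leading_word (tri_aut \<alpha> p \<beta> \<gamma> u) (?Lk l2)"
    unfolding u_def k_def using S \<alpha> \<beta> \<open>k > 0\<close> by (intro leading_word_tri_aut_lincomb) (simp_all add: k_def)
  have "k \<le> a * k"
    using x by simp
  also have "\<dots> \<le> length (?Lk la)"
    using length_ubasis_word_ge [OF x(2), of "replicate k True"] by simp
  also have "\<dots> \<le> length (?Lk l2)"
    using x l2 length_le_if_word_rank_le by blast
  finally have long: "k \<le> length (?Lk l2)" .
  then have "?Lk l2 \<noteq> ?L l2"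
    using short [OF l2(1)] by auto
  from count_list_ubasis_word_y_power_less [OF \<open>k > 0\<close> this]
  have "count_list (?Lk l2) True \<noteq> count_list (?Lk l2) False"
    by simp
  moreover have "tri_aut \<alpha> p \<beta> \<gamma> u (?Lk l2) \<noteq> 0"
    using lead by (simp add: leading_word_def)
  ultimately have "tri_aut \<alpha> p \<beta> \<gamma> u \<notin> ncV \<and> length (?Lk l2) \<le> degbar (tri_aut \<alpha> p \<beta> \<gamma> u)"
    using unbalanced_not_in_ncV_degbar_ge [OF finite_ncsupp_if_leading_word [OF lead]] by blast
  with long show ?thesis
    by (simp add: k_def)
qed

theorem corollary2p4:
  fixes u :: "'k::field ncp"
    and c :: "(nat \<times> nat) list \<Rightarrow> 'k"
    and \<alpha> \<beta> \<gamma> :: "'k"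
    and p :: "'k poly"
  assumes u_fin: "finite (ncsupp u)"
    and u_notV: "u \<notin> ncV"
    and c_fin: "finite {l. c l \<noteq> 0}"
    and c_idx: "\<forall>l. c l \<noteq> 0 \<longrightarrow> l \<noteq> []"
    and u_expand: "u = (\<lambda>w. \<Sum>l\<in>{l. c l \<noteq> 0}. c l * ubasis l w)"
    and \<alpha>: "\<alpha> \<noteq> 0" and \<beta>: "\<beta> \<noteq> 0"
    and p_deg: "degree p \<ge> 2"
  shows "((\<forall>l. c l \<noteq> 0 \<longrightarrow> (\<forall>(a, b)\<in>set l. a = 0))
            \<longrightarrow> ncdeg u = ncdeg (tri_aut \<alpha> p \<beta> \<gamma> u))
       \<and> (((\<exists>l. c l \<noteq> 0 \<and> (\<exists>(a, b)\<in>set l. a \<noteq> 0)) \<and> degree p > ncdeg u)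
            \<longrightarrow> tri_aut \<alpha> p \<beta> \<gamma> u \<notin> ncV \<and> degbar (tri_aut \<alpha> p \<beta> \<gamma> u) \<ge> degree p)"
proof -
  define S where "S = {l. c l \<noteq> 0}"
  have S: "finite S" "\<forall>l\<in>S. c l \<noteq> 0 \<and> l \<noteq> []"
    using c_fin c_idx by (auto simp: S_def)
  have u: "u = (\<lambda>w. \<Sum>l\<in>S. c l * ubasis l w)"
    using u_expand by (simp add: S_def)
  have "S \<noteq> {}"
    using u_notV zero_in_ncV by (auto simp: u)
  have "ncdeg u = ncdeg (tri_aut \<alpha> p \<beta> \<gamma> u)" if "\<forall>l. c l \<noteq> 0 \<longrightarrow> (\<forall>(a, b)\<in>set l. a = 0)"
    using ncdeg_tri_aut_eq_if_x_free [OF S(1) \<open>S \<noteq> {}\<close> S(2) _ \<alpha> \<beta>] that p_deg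
    by (simp add: u S_def)
  moreover have "tri_aut \<alpha> p \<beta> \<gamma> u \<notin> ncV \<and> degbar (tri_aut \<alpha> p \<beta> \<gamma> u) \<ge> degree p"
    if x: "\<exists>l. c l \<noteq> 0 \<and> (\<exists>(a, b)\<in>set l. a \<noteq> 0)" and deg: "degree p > ncdeg u"
  proof -
    obtain la a b where "la \<in> S" "(a, b) \<in> set la" "a \<noteq> 0"
      using x by (auto simp: S_def)
    then show ?thesis
      using degbar_tri_aut_ge_if_x_occurs [OF S] \<alpha> \<beta> deg by (simp add: u)
  qed
  ultimately show ?thesis
    by blast
qed

end
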